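(* In the MAD-HTLC game described in the context, consider the last round, i.e. a subgame $G(T,s)$ for either $s\in\{\mathrm{red},\mathrm{irred}\}$. If $tx^{\mathrm{dep}}_{\mathcal{A}}$ and at least one of $tx^{\mathrm{dep}}_{\mathcal{B}}$ or $tx^{\mathrm{dc}}_{\mathcal{B}}$ have been published, then the miners' best-response strategy is not to include any of $\mathcal{A}$'s or $\mathcal{B}$'s transactions in this round.
   Context: Blockchain model: $n$ miners; miner $i$ has mining power $\lambda_i>0$, $\sum_i\lambda_i=1$. In each round exactly one miner is chosen, miner $i$ with probability $\lambda_i$, and creates a block containing one transaction of her choice, receiving its fee. An unrelated transaction offering the base fee $f$ is always available. Publishing a transaction reveals its contents (in particular preimages) to everyone. A contract can be redeemed by at most one confirmed transaction. All parties are rational and non-myopic, with utility the expected tokens owned at the end of the game. MAD-HTLC: preimages $pre_a,pre_b$ with digests $dig_a=H(pre_a)$, $dig_b=H(pre_b)$, chosen by $\mathcal{B}$; only $\mathcal{B}$ knows $pre_b$; $\mathcal{A}$ may know $pre_a$. Contracts initiated in block $b_j$ with timeout $T$: MH-Dep ($v^{\mathrm{dep}}$ tokens), redeemable via dep-A (signature of $\mathcal{A}$ and $pre_a$; any block), dep-B (signature of $\mathcal{B}$ and $pre_b$; only at least $T$ blocks after initiation), dep-M (both $pre_a,pre_b$; any block); MH-Col ($v^{\mathrm{col}}$ tokens), redeemable only at least $T$ blocks after initiation via col-B (signature of $\mathcal{B}$) or col-M (both $pre_a,pre_b$). Game: $T$ rounds creating $b_{j+1},\dots,b_{j+T}$;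 in each round $\mathcal{A},\mathcal{B}$ alternately publish transactions, then a random miner creates the block. Transactions: $tx^{\mathrm{dep}}_{\mathcal{A}}$ (MH-Dep via dep-A, fee $f<f^{\mathrm{dep}}_{\mathcal{A}}<v^{\mathrm{dep}}$); $tx^{\mathrm{dep}}_{\mathcal{B}}$ (MH-Dep via dep-B, fee $f<f^{\mathrm{dep}}_{\mathcal{B}}<v^{\mathrm{dep}}$); $tx^{\mathrm{col}}_{\mathcal{B}}$ (MH-Col via col-B, fee $f<f^{\mathrm{col}}_{\mathcal{B}}<v^{\mathrm{col}}$); $tx^{\mathrm{dc}}_{\mathcal{B}}$ (both, fee $f<f^{\mathrm{dc}}_{\mathcal{B}}<v^{\mathrm{dep}}+v^{\mathrm{col}}$). A miner may include an unrelated transaction (fee $f$), any currently valid published transaction, or, if both preimages were revealed by published transactions, her own transaction redeeming MH-Dep via dep-M (reward $v^{\mathrm{dep}}$, while MH-Dep is unredeemed), MH-Col via col-M (reward $v^{\mathrm{col}}$, last round only), or both (reward $v^{\mathrm{dep}}+v^{\mathrm{col}}$, last round, MH-Dep unredeemed). $G(k,s)$ denotes the subgame just before round $k\in[1,T]$ with MH-Dep redeemable ($s=\mathrm{red}$) or already redeemed ($s=\mathrm{irred}$). *)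

theory Defs
  imports Complex_Main
begin

record params =
  base_fee :: real
  v_dep :: real
  v_col :: real
  fee_dep_A :: real
  fee_dep_B :: real
  fee_col_B :: real
  fee_dc_B :: real
  timeout :: nat

definition valid_params :: "params \<Rightarrow> bool" where
  "valid_params p \<longleftrightarrow>
     timeout p \<ge> 1 \<and>
     base_fee p < fee_dep_A p \<and> fee_dep_A p < v_dep p \<and>
     base_fee p < fee_dep_B p \<and> fee_dep_B p < v_dep p \<and>
     base_fee p < fee_col_B p \<and> fee_col_B p < v_col p \<and>
     base_fee p < fee_dc_B p \<and> fee_dc_B p < v_dep p + v_col p"

datatype tx = TxDepA | TxDepB | TxColB | TxDC

text \<open>State of MH-Dep: redeemable or already redeemed.\<close>
datatype depstate = Red | Irred

datatype action =
    Unrelated          \<comment> \<open>unrelated transaction with base fee f\<close>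
  | Include tx
  | OwnDepM            \<comment> \<open>own tx redeeming MH-Dep via dep-M\<close>
  | OwnColM            \<comment> \<open>own tx redeeming MH-Col via col-M\<close>
  | OwnBoth            \<comment> \<open>own tx redeeming both via dep-M and col-M\<close>

fun tx_fee :: "params \<Rightarrow> tx \<Rightarrow> real" where
  "tx_fee p TxDepA = fee_dep_A p"
| "tx_fee p TxDepB = fee_dep_B p"
| "tx_fee p TxColB = fee_col_B p"
| "tx_fee p TxDC = fee_dc_B p"

fun reveals_pre_a :: "tx \<Rightarrow> bool" where
  "reveals_pre_a TxDepA = True"
| "reveals_pre_a _ = False"

fun reveals_pre_b :: "tx \<Rightarrow> bool" where
  "reveals_pre_b TxDepB = True"
| "reveals_pre_b TxDC = True"
| "reveals_pre_b _ = False"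

definition both_revealed :: "tx set \<Rightarrow> bool" where
  "both_revealed P \<longleftrightarrow> (\<exists>t\<in>P. reveals_pre_a t) \<and> (\<exists>t\<in>P. reveals_pre_b t)"

text \<open>Validity of a published transaction in round k (creating block b_{j+k})
  given the state s of MH-Dep. dep-B and col-B require at least T blocks after
  initiation, i.e. k \<ge> T. MH-Col can only be redeemed at k \<ge> T, so before the
  last round it is unredeemed.\<close>
fun tx_valid :: "params \<Rightarrow> nat \<Rightarrow> depstate \<Rightarrow> tx \<Rightarrow> bool" where
  "tx_valid p k s TxDepA = (s = Red)"
| "tx_valid p k s TxDepB = (s = Red \<and> k \<ge> timeout p)"
| "tx_valid p k s TxColB = (k \<ge> timeout p)"
| "tx_valid p k s TxDC = (s = Red \<and> k \<ge> timeout p)"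

fun available :: "params \<Rightarrow> nat \<Rightarrow> depstate \<Rightarrow> tx set \<Rightarrow> action \<Rightarrow> bool" where
  "available p k s P Unrelated = True"
| "available p k s P (Include t) = (t \<in> P \<and> tx_valid p k s t)"
| "available p k s P OwnDepM = (both_revealed P \<and> s = Red)"
| "available p k s P OwnColM = (both_revealed P \<and> k = timeout p)"
| "available p k s P OwnBoth = (both_revealed P \<and> k = timeout p \<and> s = Red)"

fun reward :: "params \<Rightarrow> action \<Rightarrow> real" where
  "reward p Unrelated = base_fee p"
| "reward p (Include t) = tx_fee p t"
| "reward p OwnDepM = v_dep p"
| "reward p OwnColM = v_col p"
| "reward p OwnBoth = v_dep p + v_col p"

text \<open>In the last round (k = T) the game ends after the block is created, so a
  miner's utility (expected tokens at the end of the game) from an action is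
  her current holdings plus the reward of the block; the best responses are
  the available actions maximising this utility.\<close>
definition last_round_utility :: "params \<Rightarrow> real \<Rightarrow> action \<Rightarrow> real" where
  "last_round_utility p holdings a = holdings + reward p a"

definition best_response_last ::
  "params \<Rightarrow> depstate \<Rightarrow> tx set \<Rightarrow> real \<Rightarrow> action \<Rightarrow> bool" where
  "best_response_last p s P holdings a \<longleftrightarrow>
     available p (timeout p) s P a \<and>
     (\<forall>b. available p (timeout p) s P b \<longrightarrow>
            last_round_utility p holdings b \<le> last_round_utility p holdings a)"

end

theory Submission
  imports Defs
begin

text \<open>Since the miner's action set is finite, a best response always exists. Once both
  preimages are public, every valid transaction of A or B is strictly dominated in the
  last round by the miner's own transaction claiming the same contract(s) through the
  preimage paths, because each offered fee is below the value it unlocks.\<close>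

lemma UNIV_tx: "(UNIV :: tx set) = {TxDepA, TxDepB, TxColB, TxDC}"
  using tx.exhaust by blast

lemma UNIV_action:
  "(UNIV :: action set) = {Unrelated, OwnDepM, OwnColM, OwnBoth} \<union> Include ` UNIV"
  using action.exhaust by blast

lemma finite_UNIV_action: "finite (UNIV :: action set)"
  by (simp add: UNIV_action UNIV_tx)

lemma best_response_last_exists: "\<exists>a. best_response_last p s P holdings a"
proof -
  let ?A = "{a. available p (timeout p) s P a}"
  have "finite ?A"
    using finite_UNIV_action by (rule finite_subset[rotated]) simp
  moreover have "Unrelated \<in> ?A"
    by simp
  ultimately have "Max (reward p ` ?A) \<in> reward p ` ?A"
    by (intro Max_in finite_imageI) blast+
  then obtain a where "a \<in> ?A" and "reward p a = Max (reward p ` ?A)"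
    by auto
  moreover have "reward p b \<le> Max (reward p ` ?A)" if "b \<in> ?A" for b
    using \<open>finite ?A\<close> that by simp
  ultimately show ?thesis
    unfolding best_response_last_def last_round_utility_def by auto
qed

lemma both_revealed_if_published:
  assumes "TxDepA \<in> P" and "TxDepB \<in> P \<or> TxDC \<in> P"
  shows "both_revealed P"
  using assms unfolding both_revealed_def by force

lemma valid_tx_dominated_last:
  assumes "valid_params p" and "both_revealed P" and "tx_valid p (timeout p) s t"
  shows "\<exists>b. available p (timeout p) s P b \<and> tx_fee p t < reward p b"
proof (cases t)
  case TxDepA
  then show ?thesis using assms by (intro exI[of _ OwnDepM]) (auto simp: valid_params_def)
next
  case TxDepB
  then show ?thesis using assms by (intro exI[of _ OwnDepM]) (auto simp: valid_params_def)
next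
  case TxColB
  then show ?thesis using assms by (intro exI[of _ OwnColM]) (auto simp: valid_params_def)
next
  case TxDC
  then show ?thesis using assms by (intro exI[of _ OwnBoth]) (auto simp: valid_params_def)
qed

lemma best_response_last_not_Include:
  assumes "valid_params p" and "both_revealed P"
    and "best_response_last p s P holdings a"
  shows "a \<noteq> Include t"
proof
  assume "a = Include t"
  with assms(3) have "tx_valid p (timeout p) s t"
    and "\<And>b. available p (timeout p) s P b \<Longrightarrow> reward p b \<le> tx_fee p t"
    unfolding best_response_last_def last_round_utility_def by auto
  with valid_tx_dominated_last[OF assms(1,2)] show False
    by force
qed

theorem lemma4:
  fixes p :: params and s :: depstate and P :: "tx set" and holdings :: real
  assumes "valid_params p"
    and "TxDepA \<in> P"
    and "TxDepB \<in> P \<or> TxDC \<in> P"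
  shows "(\<exists>a. best_response_last p s P holdings a) \<and>
         (\<forall>a. best_response_last p s P holdings a \<longrightarrow> (\<forall>t. a \<noteq> Include t))"
  using best_response_last_exists
    best_response_last_not_Include[OF assms(1) both_revealed_if_published[OF assms(2,3)]]
  by blast

end
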